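(* Let $\mathcal O$ be a phylogenetic quiver with evolutionary sequence $(\mathcal O_m,\le)_{m\ge0}$, $p:\mathcal O_m\to\mathcal O_{m-1}$. Let $a\in\mathcal O_m$, $b\in\mathcal O_n$ with $m,n\ge0$. Then: (i) $a\le b$ if and only if $m\le n$ and $a\le p^{n-m}(b)$ in $\mathcal O_m$ (where $p^0$ is the identity); (ii) if $m=n=0$, then $a\le b\iff a=b$; (iii) if $m=n\ge1$ and $a\le b$, then $p(a)=p(b)$; (iv) if $n=m+1$, then $p(b)=a$ if and only if there is an edge $B\to A$ in $\mathcal O$ with $A,B$ vertices of $\mathcal O$ representing $a,b$ respectively.
   Context: A quiver consists of a class of vertices and, for each ordered pair of vertices $(A,B)$, a set of edges $A\to B$ (loops and multiple edges allowed). An evolution of length $m\ge 0$ is a sequence $A_0\leftarrow A_1\leftarrow\cdots\leftarrow A_m$ of vertices together with edges $A_k\to A_{k-1}$ ($1\le k\le m$); $A_0$ is its initial and $A_m$ its terminal vertex. Write $A\le B$ ($A$ is an ancestor of $B$) if there is an evolution with initial vertex $A$ and terminal vertex $B$; $A,B$ are isotypic ($A\sim B$) if $A\le B$ and $B\le A$. A vertex $A$ is primitive if every ancestor of $A$ is isotypic to $A$. A full evolution for $X$ is an evolution with primitive initial vertex and terminal vertex $X$. The height $h(X)$ is the smallest length of a full evolution for $X$ ($\infty$ if none). An evolution $\alpha=(A_0\leftarrow\cdots\leftarrow A_m)$ embeds in $\beta=(B_0\leftarrow\cdots\leftarrow B_n)$ if $m\le n$ and there are $0\le r_0<\cdots<r_m\le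 n$ with $A_k\sim B_{r_k}$. A universal evolution for $X$ is a full evolution for $X$ embedding in every full evolution for $X$; $X$ is phylogenetic if one exists. A quiver is monotonous if $h(A)\ge h(B)$ for every edge $A\to B$; small if its isotypy classes form a set; phylogenetic if small, monotonous, and all vertices phylogenetic. Evolutionary sequence of a phylogenetic quiver $\mathcal O$: let $\mathcal O_m$ be the set of isotypy classes $[A]$ of vertices of height $m$, with the relation $[A]\le[B]$ iff $A\le B$ (a partial order on the set of all isotypy classes); for $m\ge1$ the parental map $p:\mathcal O_m\to\mathcal O_{m-1}$ is $p([A])=[A_{m-1}]$ where $A_0\leftarrow\cdots\leftarrow A_{m-1}\leftarrow A_m=A$ is any universal evolution for $A$ (this is well defined). *)

theory Defs
  imports Main "HOL-Library.Extended_Nat"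
begin

text \<open>An evolution A_0 <- A_1 <- ... <- A_m is a pair
  (vertex list [A_0,...,A_m], edge list [e_1,...,e_m]) with e_k : A_k -> A_(k-1).\<close>

definition is_evol :: "('e \<Rightarrow> 'v) \<Rightarrow> ('e \<Rightarrow> 'v) \<Rightarrow> 'v list \<times> 'e list \<Rightarrow> bool" where
  "is_evol src tgt ev \<longleftrightarrow> fst ev \<noteq> [] \<and> length (snd ev) = length (fst ev) - 1 \<and>
     (\<forall>k < length (snd ev). src (snd ev ! k) = fst ev ! Suc k \<and> tgt (snd ev ! k) = fst ev ! k)"

definition evol_len :: "'v list \<times> 'e list \<Rightarrow> nat" where
  "evol_len ev = length (fst ev) - 1"

definition initial :: "'v list \<times> 'e list \<Rightarrow> 'v" where
  "initial ev = hd (fst ev)"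

definition terminal :: "'v list \<times> 'e list \<Rightarrow> 'v" where
  "terminal ev = last (fst ev)"

definition ancestor :: "('e \<Rightarrow> 'v) \<Rightarrow> ('e \<Rightarrow> 'v) \<Rightarrow> 'v \<Rightarrow> 'v \<Rightarrow> bool" where
  "ancestor src tgt A B \<longleftrightarrow> (\<exists>ev. is_evol src tgt ev \<and> initial ev = A \<and> terminal ev = B)"

definition isotypic :: "('e \<Rightarrow> 'v) \<Rightarrow> ('e \<Rightarrow> 'v) \<Rightarrow> 'v \<Rightarrow> 'v \<Rightarrow> bool" where
  "isotypic src tgt A B \<longleftrightarrow> ancestor src tgt A B \<and> ancestor src tgt B A"

definition primitive :: "('e \<Rightarrow> 'v) \<Rightarrow> ('e \<Rightarrow> 'v) \<Rightarrow> 'v \<Rightarrow> bool" where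
  "primitive src tgt A \<longleftrightarrow> (\<forall>B. ancestor src tgt B A \<longrightarrow> isotypic src tgt B A)"

definition full_evol :: "('e \<Rightarrow> 'v) \<Rightarrow> ('e \<Rightarrow> 'v) \<Rightarrow> 'v list \<times> 'e list \<Rightarrow> 'v \<Rightarrow> bool" where
  "full_evol src tgt ev X \<longleftrightarrow> is_evol src tgt ev \<and> primitive src tgt (initial ev) \<and> terminal ev = X"

definition height :: "('e \<Rightarrow> 'v) \<Rightarrow> ('e \<Rightarrow> 'v) \<Rightarrow> 'v \<Rightarrow> enat" where
  "height src tgt X =
     (if \<exists>ev. full_evol src tgt ev X
      then enat (LEAST m. \<exists>ev. full_evol src tgt ev X \<and> evol_len ev = m)
      else \<infinity>)"

definition embeds :: "('e \<Rightarrow> 'v) \<Rightarrow> ('e \<Rightarrow> 'v) \<Rightarrow> 'v list \<times> 'e list \<Rightarrow> 'v list \<times> 'e list \<Rightarrow> bool" where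
  "embeds src tgt \<alpha> \<beta> \<longleftrightarrow> evol_len \<alpha> \<le> evol_len \<beta> \<and>
     (\<exists>r :: nat \<Rightarrow> nat. (\<forall>i j. i < j \<and> j \<le> evol_len \<alpha> \<longrightarrow> r i < r j) \<and>
        r (evol_len \<alpha>) \<le> evol_len \<beta> \<and>
        (\<forall>k \<le> evol_len \<alpha>. isotypic src tgt (fst \<alpha> ! k) (fst \<beta> ! r k)))"

definition universal_evol :: "('e \<Rightarrow> 'v) \<Rightarrow> ('e \<Rightarrow> 'v) \<Rightarrow> 'v list \<times> 'e list \<Rightarrow> 'v \<Rightarrow> bool" where
  "universal_evol src tgt ev X \<longleftrightarrow> full_evol src tgt ev X \<and>
     (\<forall>\<beta>. full_evol src tgt \<beta> X \<longrightarrow> embeds src tgt ev \<beta>)"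

definition phylogenetic_vertex :: "('e \<Rightarrow> 'v) \<Rightarrow> ('e \<Rightarrow> 'v) \<Rightarrow> 'v \<Rightarrow> bool" where
  "phylogenetic_vertex src tgt X \<longleftrightarrow> (\<exists>ev. universal_evol src tgt ev X)"

definition monotonous :: "('e \<Rightarrow> 'v) \<Rightarrow> ('e \<Rightarrow> 'v) \<Rightarrow> bool" where
  "monotonous src tgt \<longleftrightarrow> (\<forall>e. height src tgt (src e) \<ge> height src tgt (tgt e))"

text \<open>Smallness is automatic in HOL: isotypy classes are subsets of the type 'v.\<close>
definition phylogenetic_quiver :: "('e \<Rightarrow> 'v) \<Rightarrow> ('e \<Rightarrow> 'v) \<Rightarrow> bool" where
  "phylogenetic_quiver src tgt \<longleftrightarrow> monotonous src tgt \<and> (\<forall>X. phylogenetic_vertex src tgt X)"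

definition iso_class :: "('e \<Rightarrow> 'v) \<Rightarrow> ('e \<Rightarrow> 'v) \<Rightarrow> 'v \<Rightarrow> 'v set" where
  "iso_class src tgt A = {B. isotypic src tgt A B}"

definition evo_level :: "('e \<Rightarrow> 'v) \<Rightarrow> ('e \<Rightarrow> 'v) \<Rightarrow> nat \<Rightarrow> 'v set set" where
  "evo_level src tgt m = {iso_class src tgt A | A. height src tgt A = enat m}"

definition class_le :: "('e \<Rightarrow> 'v) \<Rightarrow> ('e \<Rightarrow> 'v) \<Rightarrow> 'v set \<Rightarrow> 'v set \<Rightarrow> bool" where
  "class_le src tgt a b \<longleftrightarrow>
     (\<exists>A B. a = iso_class src tgt A \<and> b = iso_class src tgt B \<and> ancestor src tgt A B)"

definition parent :: "('e \<Rightarrow> 'v) \<Rightarrow> ('e \<Rightarrow> 'v) \<Rightarrow> 'v set \<Rightarrow> 'v set" where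
  "parent src tgt a = (SOME c. \<exists>A ev. a = iso_class src tgt A \<and> universal_evol src tgt ev A \<and>
       c = iso_class src tgt (fst ev ! (evol_len ev - 1)))"

end

theory Submission
  imports Defs
begin

(*
  The ancestor order is the reflexive transitive closure of the edge relation, and heights
  grow along it.  If A \<le> B, append a path from A to B to a full evolution of A of minimal
  length: the result is a full evolution of B, so a universal evolution U of B embeds in it.
  Along a minimal full evolution the k-th vertex has height k, and heights are preserved by
  isotypy; hence the embedding is the identity below h(A).  So U agrees up to isotypy with every
  minimal full evolution of A below h(A), and A \<le> U_h(A).  The first fact makes the parental
  map independent of choices and gives p(a) = p(b) for comparable classes of equal height; the
  second shows that p^(n-m)(b) is the class of U_m and decides comparability at level m.
*)

lemma successively_nth_rtranclp:
  assumes "successively R xs" "i \<le> j" "j < length xs"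
  shows "R\<^sup>*\<^sup>* (xs ! i) (xs ! j)"
  using assms(2,3)
proof (induction j)
  case (Suc j)
  then show ?case
    using successively_nth[OF assms(1), of j]
    by (cases "i = Suc j") (auto intro: rtranclp.rtrancl_into_rtrancl)
qed simp

lemma rtranclp_iff_successively:
  "R\<^sup>*\<^sup>* x y \<longleftrightarrow> (\<exists>xs. xs \<noteq> [] \<and> successively R xs \<and> hd xs = x \<and> last xs = y)"
proof
  assume "R\<^sup>*\<^sup>* x y"
  then show "\<exists>xs. xs \<noteq> [] \<and> successively R xs \<and> hd xs = x \<and> last xs = y"
  proof (induction rule: rtranclp_induct)
    case base
    show ?case by (intro exI[of _ "[x]"]) simp
  next
    case (step y z)
    then obtain xs where "xs \<noteq> []" "successively R xs" "hd xs = x" "last xs = y" by blast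
    with step.hyps(2) show ?case
      by (intro exI[of _ "xs @ [z]"]) (simp add: successively_append_iff)
  qed
next
  assume "\<exists>xs. xs \<noteq> [] \<and> successively R xs \<and> hd xs = x \<and> last xs = y"
  then obtain xs where "xs \<noteq> []" "successively R xs" "hd xs = x" "last xs = y" by blast
  then show "R\<^sup>*\<^sup>* x y"
    using successively_nth_rtranclp[of R xs 0 "length xs - 1"] by (simp add: hd_conv_nth last_conv_nth)
qed

lemma successively_take: "successively R xs \<Longrightarrow> successively R (take n xs)"
  unfolding successively_conv_nth by auto

lemma successively_drop: "successively R xs \<Longrightarrow> successively R (drop n xs)"
  unfolding successively_conv_nth by auto

lemma successively_butlast_append:
  assumes "successively R xs" "ys \<noteq> []" "hd ys = last xs" "successively R ys"
  shows "successively R (butlast xs @ ys)"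
proof (cases xs rule: rev_cases)
  case (snoc xs' x)
  then show ?thesis
    using assms by (cases ys) (auto simp: successively_append_iff)
qed (use assms in simp)

lemma strict_mono_upto_imp_increasing:
  fixes r :: "nat \<Rightarrow> nat"
  assumes "\<forall>i j. i < j \<and> j \<le> n \<longrightarrow> r i < r j" "i \<le> n"
  shows "i \<le> r i"
  using assms(2)
proof (induction i)
  case (Suc i)
  then show ?case using assms(1)[rule_format, of i "Suc i"] by simp
qed simp

locale quiver =
  fixes src tgt :: "'e \<Rightarrow> 'v"
begin

(* step A B: an edge B \<rightarrow> A, so that step\<^sup>*\<^sup>* is the ancestor order. *)
definition step :: "'v \<Rightarrow> 'v \<Rightarrow> bool" where
  "step A B \<longleftrightarrow> (\<exists>e. src e = B \<and> tgt e = A)"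

lemma is_evol_imp_chain:
  assumes "is_evol src tgt ev"
  shows "fst ev \<noteq> [] \<and> successively step (fst ev)"
proof -
  have "step (fst ev ! k) (fst ev ! Suc k)" if "Suc k < length (fst ev)" for k
  proof -
    from assms that have "k < length (snd ev)" by (simp add: is_evol_def)
    with assms show ?thesis unfolding is_evol_def step_def by blast
  qed
  with assms show ?thesis by (simp add: is_evol_def successively_conv_nth)
qed

lemma chain_imp_is_evol:
  assumes "vs \<noteq> []" "successively step vs"
  obtains es where "is_evol src tgt (vs, es)"
proof
  let ?es = "map (\<lambda>k. SOME e. src e = vs ! Suc k \<and> tgt e = vs ! k) [0..<length vs - 1]"
  have "src (?es ! k) = vs ! Suc k \<and> tgt (?es ! k) = vs ! k" if "k < length ?es" for k
  proof -
    from that have "step (vs ! k) (vs ! Suc k)"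
      using assms(2) successively_nth by fastforce
    then show ?thesis
      using that someI_ex[of "\<lambda>e. src e = vs ! Suc k \<and> tgt e = vs ! k"] by (simp add: step_def)
  qed
  then show "is_evol src tgt (vs, ?es)"
    using assms(1) by (simp add: is_evol_def)
qed

lemma ancestor_iff: "ancestor src tgt A B \<longleftrightarrow> step\<^sup>*\<^sup>* A B"
proof
  assume "ancestor src tgt A B"
  then obtain ev where "is_evol src tgt ev" "initial ev = A" "terminal ev = B"
    unfolding ancestor_def by blast
  with is_evol_imp_chain show "step\<^sup>*\<^sup>* A B"
    unfolding rtranclp_iff_successively initial_def terminal_def by blast
next
  assume "step\<^sup>*\<^sup>* A B"
  then obtain vs where vs: "vs \<noteq> []" "successively step vs" "hd vs = A" "last vs = B"
    unfolding rtranclp_iff_successively by blast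
  obtain es where "is_evol src tgt (vs, es)" using vs(1,2) by (rule chain_imp_is_evol)
  with vs show "ancestor src tgt A B"
    unfolding ancestor_def initial_def terminal_def by fastforce
qed

lemma isotypic_iff: "isotypic src tgt A B \<longleftrightarrow> step\<^sup>*\<^sup>* A B \<and> step\<^sup>*\<^sup>* B A"
  by (simp add: isotypic_def ancestor_iff)

lemma primitive_iff: "primitive src tgt A \<longleftrightarrow> (\<forall>B. step\<^sup>*\<^sup>* B A \<longrightarrow> step\<^sup>*\<^sup>* A B)"
  unfolding primitive_def ancestor_iff isotypic_iff by blast

lemma iso_class_eq_iff: "iso_class src tgt A = iso_class src tgt B \<longleftrightarrow> isotypic src tgt A B"
proof
  assume "iso_class src tgt A = iso_class src tgt B"
  moreover have "B \<in> iso_class src tgt B" by (simp add: iso_class_def isotypic_iff)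
  ultimately show "isotypic src tgt A B" unfolding iso_class_def by blast
next
  assume "isotypic src tgt A B"
  then show "iso_class src tgt A = iso_class src tgt B"
    unfolding iso_class_def isotypic_iff by (auto intro: rtranclp_trans)
qed

lemma class_le_iso_class_iff:
  "class_le src tgt (iso_class src tgt A) (iso_class src tgt B) \<longleftrightarrow> step\<^sup>*\<^sup>* A B"
proof
  assume "class_le src tgt (iso_class src tgt A) (iso_class src tgt B)"
  then obtain A' B' where "isotypic src tgt A A'" "isotypic src tgt B B'" "step\<^sup>*\<^sup>* A' B'"
    unfolding class_le_def ancestor_iff iso_class_eq_iff by blast
  then show "step\<^sup>*\<^sup>* A B" unfolding isotypic_iff by (blast intro: rtranclp_trans)
next
  assume "step\<^sup>*\<^sup>* A B"
  then show "class_le src tgt (iso_class src tgt A) (iso_class src tgt B)"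
    unfolding class_le_def ancestor_iff by blast
qed

lemma class_le_primitive_iff:
  assumes "primitive src tgt B"
  shows "class_le src tgt (iso_class src tgt A) (iso_class src tgt B) \<longleftrightarrow>
    iso_class src tgt A = iso_class src tgt B"
  using assms unfolding class_le_iso_class_iff iso_class_eq_iff isotypic_iff primitive_iff
  by blast

end

locale phylogenetic = quiver src tgt for src tgt :: "'e \<Rightarrow> 'v" +
  assumes phylogenetic: "phylogenetic_quiver src tgt"
begin

(* The vertex list of a full evolution; its edges are recovered from step. *)
definition full_chain :: "'v list \<Rightarrow> 'v \<Rightarrow> bool" where
  "full_chain vs X \<longleftrightarrow> vs \<noteq> [] \<and> successively step vs \<and> primitive src tgt (hd vs) \<and> last vs = X"

definition ht :: "'v \<Rightarrow> nat" where
  "ht X = the_enat (height src tgt X)"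

lemma full_evol_imp_full_chain: "full_evol src tgt ev X \<Longrightarrow> full_chain (fst ev) X"
  using is_evol_imp_chain[of ev] by (simp add: full_evol_def full_chain_def initial_def terminal_def)

lemma full_chain_imp_full_evol:
  assumes "full_chain vs X"
  obtains es where "full_evol src tgt (vs, es) X"
proof -
  from assms have "vs \<noteq> []" "successively step vs" by (simp_all add: full_chain_def)
  then obtain es where "is_evol src tgt (vs, es)" by (rule chain_imp_is_evol)
  with assms show thesis
    by (intro that[of es]) (simp add: full_evol_def full_chain_def initial_def terminal_def)
qed

lemma universal_evol_exists: "\<exists>U. universal_evol src tgt U X"
  using phylogenetic unfolding phylogenetic_quiver_def phylogenetic_vertex_def by blast

lemma height_eq_ht: "height src tgt X = enat (ht X)"
  using universal_evol_exists[of X] unfolding ht_def height_def universal_evol_def by auto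

lemma evo_level_iff: "a \<in> evo_level src tgt m \<longleftrightarrow> (\<exists>A. a = iso_class src tgt A \<and> ht A = m)"
  by (simp add: evo_level_def height_eq_ht)

lemma ht_eq_Least:
  "ht X = (LEAST m. \<exists>ev. full_evol src tgt ev X \<and> evol_len ev = m)"
  using height_eq_ht[of X] universal_evol_exists[of X]
  unfolding height_def universal_evol_def by (auto split: if_splits)

lemma ht_le_length:
  assumes "full_chain vs X"
  shows "ht X \<le> length vs - 1"
proof -
  obtain es where "full_evol src tgt (vs, es) X"
    using assms by (rule full_chain_imp_full_evol)
  then show ?thesis
    unfolding ht_eq_Least by (intro Least_le) (auto simp: evol_len_def)
qed

lemma minimal_full_chain_exists: "\<exists>vs. full_chain vs X \<and> length vs = Suc (ht X)"
proof -
  obtain U where "universal_evol src tgt U X" using universal_evol_exists by blast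
  then have "\<exists>m ev. full_evol src tgt ev X \<and> evol_len ev = m"
    unfolding universal_evol_def by blast
  from LeastI_ex[OF this] obtain ev where ev: "full_evol src tgt ev X" "evol_len ev = ht X"
    unfolding ht_eq_Least by blast
  from ev(1) have "full_chain (fst ev) X" by (rule full_evol_imp_full_chain)
  moreover from this have "length (fst ev) = Suc (ht X)"
    using ev(2) by (cases "fst ev") (auto simp: full_chain_def evol_len_def)
  ultimately show ?thesis by blast
qed

lemma universal_evol_minimal:
  assumes "universal_evol src tgt U X"
  shows "full_chain (fst U) X" "length (fst U) = Suc (ht X)"
proof -
  show chain: "full_chain (fst U) X"
    using assms full_evol_imp_full_chain unfolding universal_evol_def by blast
  obtain vs where vs: "full_chain vs X" "length vs = Suc (ht X)"
    using minimal_full_chain_exists by blast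
  obtain es where "full_evol src tgt (vs, es) X" using full_chain_imp_full_evol vs(1) by blast
  with assms have "embeds src tgt U (vs, es)" unfolding universal_evol_def by blast
  then have "length (fst U) - 1 \<le> ht X" using vs(2) unfolding embeds_def evol_len_def by simp
  moreover have "ht X \<le> length (fst U) - 1" using ht_le_length chain by blast
  moreover have "fst U \<noteq> []" using chain by (simp add: full_chain_def)
  ultimately show "length (fst U) = Suc (ht X)" by simp
qed

lemma ht_mono: "step\<^sup>*\<^sup>* A B \<Longrightarrow> ht A \<le> ht B"
proof (induction rule: rtranclp_induct)
  case (step B C)
  then have "height src tgt B \<le> height src tgt C"
    using phylogenetic unfolding phylogenetic_quiver_def monotonous_def step_def by blast
  with step.IH show ?case by (simp add: height_eq_ht)
qed simp

lemma isotypic_imp_ht_eq: "isotypic src tgt A B \<Longrightarrow> ht A = ht B"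
  unfolding isotypic_iff using ht_mono le_antisym by blast

lemma ht_0_imp_primitive:
  assumes "ht A = 0"
  shows "primitive src tgt A"
proof -
  obtain vs where "full_chain vs A" "length vs = 1"
    using minimal_full_chain_exists[of A] assms by auto
  then show ?thesis by (cases vs) (auto simp: full_chain_def)
qed

lemma full_chain_take:
  "full_chain vs X \<Longrightarrow> i < length vs \<Longrightarrow> full_chain (take (Suc i) vs) (vs ! i)"
  unfolding full_chain_def by (auto simp: successively_take hd_take last_conv_nth)

lemma full_chain_extend:
  assumes "full_chain vs A" "successively step ps" "ps \<noteq> []" "hd ps = A"
  shows "full_chain (butlast vs @ ps) (last ps)"
proof -
  have "hd (butlast vs @ ps) = hd vs"
    using assms by (cases vs rule: rev_cases) (auto simp: full_chain_def hd_append neq_Nil_conv)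
  then show ?thesis
    using assms successively_butlast_append[of step vs ps] by (simp add: full_chain_def)
qed

lemma ht_nth_minimal_chain:
  assumes vs: "full_chain vs X" "length vs = Suc (ht X)" and i: "i < length vs"
  shows "ht (vs ! i) = i"
proof (rule antisym)
  show "ht (vs ! i) \<le> i" using ht_le_length[OF full_chain_take[OF vs(1) i]] i by simp
next
  obtain ws where ws: "full_chain ws (vs ! i)" "length ws = Suc (ht (vs ! i))"
    using minimal_full_chain_exists by blast
  have "full_chain (butlast ws @ drop i vs) X"
    using full_chain_extend[OF ws(1), of "drop i vs"] vs i
    by (simp add: successively_drop full_chain_def hd_drop_conv_nth)
  from ht_le_length[OF this] show "i \<le> ht (vs ! i)" using ws(2) vs(2) i by simp
qed

lemma universal_evol_embeds_extension:
  assumes U: "universal_evol src tgt U B"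
    and vs: "full_chain vs A" "length vs = Suc (ht A)"
    and ps: "successively step ps" "ps \<noteq> []" "hd ps = A" "last ps = B"
  obtains r where "\<forall>k \<le> ht B. k \<le> r k \<and> r k < ht A + length ps \<and>
    isotypic src tgt (fst U ! k) ((butlast vs @ ps) ! r k)"
proof -
  have "full_chain (butlast vs @ ps) B"
    using full_chain_extend[OF vs(1) ps(1-3)] ps(4) by simp
  then obtain es where "full_evol src tgt (butlast vs @ ps, es) B"
    by (rule full_chain_imp_full_evol)
  with U have "embeds src tgt U (butlast vs @ ps, es)"
    unfolding universal_evol_def by blast
  moreover have "evol_len U = ht B"
    using universal_evol_minimal(2)[OF U] by (simp add: evol_len_def)
  moreover have "evol_len (butlast vs @ ps, es) = ht A + length ps - 1"
    using vs(2) by (simp add: evol_len_def)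
  ultimately obtain r where
    mono: "\<forall>i j. i < j \<and> j \<le> ht B \<longrightarrow> r i < r j" and
    bound: "r (ht B) \<le> ht A + length ps - 1" and
    iso: "\<forall>k \<le> ht B. isotypic src tgt (fst U ! k) ((butlast vs @ ps) ! r k)"
    unfolding embeds_def by auto
  have "k \<le> r k \<and> r k < ht A + length ps \<and>
      isotypic src tgt (fst U ! k) ((butlast vs @ ps) ! r k)" if k: "k \<le> ht B" for k
  proof -
    have "r k \<le> r (ht B)"
      using k mono by (cases "k = ht B") (auto intro: less_imp_le)
    with bound ps(2) have "r k < ht A + length ps" by (cases ps) auto
    with strict_mono_upto_imp_increasing[OF mono k] iso k show ?thesis by blast
  qed
  then show thesis by (intro that[of r]) blast
qed

lemma ancestor_nth_extension:
  assumes "length vs = Suc m" "successively step ps" "ps \<noteq> []" "hd ps = A"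
    and "m \<le> j" "j < m + length ps"
  shows "step\<^sup>*\<^sup>* A ((butlast vs @ ps) ! j)"
proof -
  have "(butlast vs @ ps) ! j = ps ! (j - m)"
    using assms(1,5) by (simp add: nth_append_right)
  moreover have "step\<^sup>*\<^sup>* (ps ! 0) (ps ! (j - m))"
    using assms(2,5,6) by (intro successively_nth_rtranclp) auto
  ultimately show ?thesis
    using assms(3,4) by (simp add: hd_conv_nth)
qed

lemma universal_evol_nth_isotypic:
  assumes U: "universal_evol src tgt U B"
    and vs: "full_chain vs A" "length vs = Suc (ht A)"
    and AB: "step\<^sup>*\<^sup>* A B" and i: "i < ht A"
  shows "isotypic src tgt (fst U ! i) (vs ! i)"
proof -
  obtain ps where ps: "ps \<noteq> []" "successively step ps" "hd ps = A" "last ps = B"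
    using AB unfolding rtranclp_iff_successively by blast
  obtain r where r: "\<forall>k \<le> ht B. k \<le> r k \<and> r k < ht A + length ps \<and>
      isotypic src tgt (fst U ! k) ((butlast vs @ ps) ! r k)"
    using universal_evol_embeds_extension[OF U vs ps(2,1,3,4)] by blast
  have "i \<le> ht B" using ht_mono[OF AB] i by simp
  with r have iso: "isotypic src tgt (fst U ! i) ((butlast vs @ ps) ! r i)"
    and r_bound: "r i < ht A + length ps" by auto
  have "ht (fst U ! i) = i"
    using ht_nth_minimal_chain[OF universal_evol_minimal[OF U]] \<open>i \<le> ht B\<close>
      universal_evol_minimal(2)[OF U] by simp
  with iso have ht_ri: "ht ((butlast vs @ ps) ! r i) = i"
    using isotypic_imp_ht_eq by simp
  have "r i < ht A"
  proof (rule ccontr)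
    assume "\<not> r i < ht A"
    then have "step\<^sup>*\<^sup>* A ((butlast vs @ ps) ! r i)"
      using ancestor_nth_extension[OF vs(2) ps(2,1,3)] r_bound by simp
    then have "ht A \<le> ht ((butlast vs @ ps) ! r i)" by (rule ht_mono)
    with ht_ri i show False by simp
  qed
  then have "(butlast vs @ ps) ! r i = vs ! r i"
    using vs(2) by (simp add: nth_append_left nth_butlast)
  moreover have "ht (vs ! r i) = r i"
    using ht_nth_minimal_chain[OF vs] \<open>r i < ht A\<close> vs(2) by simp
  ultimately show ?thesis using iso ht_ri by simp
qed

lemma ancestor_universal_evol_nth:
  assumes U: "universal_evol src tgt U B" and AB: "step\<^sup>*\<^sup>* A B"
  shows "step\<^sup>*\<^sup>* A (fst U ! ht A)"
proof -
  obtain vs where vs: "full_chain vs A" "length vs = Suc (ht A)"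
    using minimal_full_chain_exists by blast
  obtain ps where ps: "ps \<noteq> []" "successively step ps" "hd ps = A" "last ps = B"
    using AB unfolding rtranclp_iff_successively by blast
  obtain r where r: "\<forall>k \<le> ht B. k \<le> r k \<and> r k < ht A + length ps \<and>
      isotypic src tgt (fst U ! k) ((butlast vs @ ps) ! r k)"
    using universal_evol_embeds_extension[OF U vs ps(2,1,3,4)] by blast
  with ht_mono[OF AB] have "ht A \<le> r (ht A)" "r (ht A) < ht A + length ps"
    and iso: "isotypic src tgt (fst U ! ht A) ((butlast vs @ ps) ! r (ht A))"
    by auto
  then have "step\<^sup>*\<^sup>* A ((butlast vs @ ps) ! r (ht A))"
    using ancestor_nth_extension[OF vs(2) ps(2,1,3)] by simp
  with iso show ?thesis
    unfolding isotypic_iff by (blast intro: rtranclp_trans)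
qed

lemma step_isotypic_universal_evol_nth:
  assumes U: "universal_evol src tgt U B" and AB: "step A B" and ht_B: "ht B = Suc (ht A)"
  shows "isotypic src tgt (fst U ! ht A) A"
proof -
  obtain vs where vs: "full_chain vs A" "length vs = Suc (ht A)"
    using minimal_full_chain_exists by blast
  have "full_chain (butlast vs @ [A, B]) B"
    using full_chain_extend[OF vs(1), of "[A, B]"] AB by simp
  moreover have "length (butlast vs @ [A, B]) = Suc (ht B)"
    using vs(2) ht_B by simp
  ultimately have "isotypic src tgt (fst U ! ht A) ((butlast vs @ [A, B]) ! ht A)"
    using universal_evol_nth_isotypic[OF U] ht_B by simp
  then show ?thesis
    using vs(2) by (simp add: nth_append_right)
qed

(* Any representative and universal evolution chosen by the SOME in parent give the same class. *)
lemma parent_iso_class: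
  assumes U: "universal_evol src tgt U B" and ht_B: "ht B = Suc k"
  shows "parent src tgt (iso_class src tgt B) = iso_class src tgt (fst U ! k)"
proof -
  let ?P = "\<lambda>c. \<exists>A ev. iso_class src tgt B = iso_class src tgt A \<and> universal_evol src tgt ev A \<and>
    c = iso_class src tgt (fst ev ! (evol_len ev - 1))"
  have "?P (iso_class src tgt (fst U ! (evol_len U - 1)))" using U by blast
  then have "?P (parent src tgt (iso_class src tgt B))"
    unfolding parent_def by (rule someI)
  then obtain A ev where BA: "isotypic src tgt B A" and ev: "universal_evol src tgt ev A"
    and par: "parent src tgt (iso_class src tgt B) = iso_class src tgt (fst ev ! (evol_len ev - 1))"
    unfolding iso_class_eq_iff by blast
  have ht_A: "ht A = Suc k" using isotypic_imp_ht_eq[OF BA] ht_B by simp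
  have "evol_len ev - 1 = k"
    using universal_evol_minimal(2)[OF ev] ht_A by (simp add: evol_len_def)
  moreover have "step\<^sup>*\<^sup>* A B" using BA unfolding isotypic_iff by blast
  then have "isotypic src tgt (fst U ! k) (fst ev ! k)"
    using universal_evol_nth_isotypic[OF U universal_evol_minimal[OF ev]] ht_A by simp
  then have "iso_class src tgt (fst U ! k) = iso_class src tgt (fst ev ! k)"
    unfolding iso_class_eq_iff .
  ultimately show ?thesis using par by simp
qed

lemma parent_pow_iso_class:
  "ht B = m + d \<Longrightarrow> \<exists>C. (parent src tgt ^^ d) (iso_class src tgt B) = iso_class src tgt C \<and>
     ht C = m \<and> (\<forall>A. ht A = m \<longrightarrow> (step\<^sup>*\<^sup>* A B \<longleftrightarrow> step\<^sup>*\<^sup>* A C))"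
proof (induction d arbitrary: B)
  case 0
  then show ?case by (intro exI[of _ B]) simp
next
  case (Suc d)
  obtain U where U: "universal_evol src tgt U B" using universal_evol_exists by blast
  note chain = universal_evol_minimal[OF U]
  define B' where "B' = fst U ! (m + d)"
  have parent_B: "parent src tgt (iso_class src tgt B) = iso_class src tgt B'"
    unfolding B'_def using parent_iso_class[OF U] Suc.prems by simp
  have "ht B' = m + d"
    unfolding B'_def using ht_nth_minimal_chain[OF chain] chain(2) Suc.prems by simp
  then obtain C where C: "(parent src tgt ^^ d) (iso_class src tgt B') = iso_class src tgt C"
    "ht C = m" "\<forall>A. ht A = m \<longrightarrow> (step\<^sup>*\<^sup>* A B' \<longleftrightarrow> step\<^sup>*\<^sup>* A C)"
    using Suc.IH by blast
  have U_path: "step\<^sup>*\<^sup>* (fst U ! i) (fst U ! j)" if "i \<le> j" "j \<le> Suc (m + d)" for i j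
    using successively_nth_rtranclp[of step "fst U" i j] chain Suc.prems that
    by (simp add: full_chain_def)
  have U_last: "fst U ! Suc (m + d) = B"
    using chain Suc.prems last_conv_nth[of "fst U"] by (simp add: full_chain_def)
  have "step\<^sup>*\<^sup>* A B \<longleftrightarrow> step\<^sup>*\<^sup>* A C" if ht_A: "ht A = m" for A
  proof -
    have "step\<^sup>*\<^sup>* A B \<longleftrightarrow> step\<^sup>*\<^sup>* A B'"
    proof
      assume "step\<^sup>*\<^sup>* A B"
      from ancestor_universal_evol_nth[OF U this] have "step\<^sup>*\<^sup>* A (fst U ! m)"
        using ht_A by simp
      then show "step\<^sup>*\<^sup>* A B'"
        unfolding B'_def using U_path[of m "m + d"] by (simp add: rtranclp_trans)
    next
      assume "step\<^sup>*\<^sup>* A B'"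
      then show "step\<^sup>*\<^sup>* A B"
        unfolding B'_def using U_path[of "m + d" "Suc (m + d)"] U_last by (simp add: rtranclp_trans)
    qed
    with C(3) ht_A show ?thesis by simp
  qed
  moreover have "(parent src tgt ^^ Suc d) (iso_class src tgt B) = iso_class src tgt C"
    by (simp only: funpow_Suc_right comp_apply parent_B C(1))
  ultimately show ?case using C(2) by (intro exI[of _ C]) simp
qed

lemma class_le_iff_parent_pow:
  assumes "ht A = m" "ht B = n"
  shows "class_le src tgt (iso_class src tgt A) (iso_class src tgt B) \<longleftrightarrow>
    m \<le> n \<and> class_le src tgt (iso_class src tgt A) ((parent src tgt ^^ (n - m)) (iso_class src tgt B))"
proof (cases "m \<le> n")
  case True
  then obtain C where "(parent src tgt ^^ (n - m)) (iso_class src tgt B) = iso_class src tgt C"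
    "\<forall>A. ht A = m \<longrightarrow> (step\<^sup>*\<^sup>* A B \<longleftrightarrow> step\<^sup>*\<^sup>* A C)"
    using parent_pow_iso_class[of B m "n - m"] assms(2) by auto
  with True assms(1) show ?thesis by (simp add: class_le_iso_class_iff)
next
  case False
  with assms show ?thesis using ht_mono by (auto simp: class_le_iso_class_iff)
qed

lemma ancestor_imp_parent_eq:
  assumes "ht A = ht B" "ht B \<ge> 1" and AB: "step\<^sup>*\<^sup>* A B"
  shows "parent src tgt (iso_class src tgt A) = parent src tgt (iso_class src tgt B)"
proof -
  obtain k where ht_A: "ht A = Suc k" and ht_B: "ht B = Suc k"
    using assms(1,2) by (cases "ht B") auto
  obtain U where U: "universal_evol src tgt U B" using universal_evol_exists by blast
  obtain V where V: "universal_evol src tgt V A" using universal_evol_exists by blast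
  have "isotypic src tgt (fst U ! k) (fst V ! k)"
    using universal_evol_nth_isotypic[OF U universal_evol_minimal[OF V] AB] ht_A by simp
  then have "iso_class src tgt (fst U ! k) = iso_class src tgt (fst V ! k)"
    unfolding iso_class_eq_iff .
  then show ?thesis
    using parent_iso_class[OF U ht_B] parent_iso_class[OF V ht_A] by simp
qed

lemma parent_iso_class_eq_iff_edge:
  assumes ht_B: "ht B = Suc (ht A)"
  shows "parent src tgt (iso_class src tgt B) = iso_class src tgt A \<longleftrightarrow>
    (\<exists>A' B' e. iso_class src tgt A = iso_class src tgt A' \<and>
      iso_class src tgt B = iso_class src tgt B' \<and> src e = B' \<and> tgt e = A')"
proof
  assume parent_B: "parent src tgt (iso_class src tgt B) = iso_class src tgt A"
  obtain U where U: "universal_evol src tgt U B" using universal_evol_exists by blast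
  note chain = universal_evol_minimal[OF U]
  have "step (fst U ! ht A) (fst U ! Suc (ht A))"
    using chain ht_B successively_nth[of step "fst U" "ht A"] by (simp add: full_chain_def)
  moreover have "fst U ! Suc (ht A) = B"
    using chain ht_B last_conv_nth[of "fst U"] by (simp add: full_chain_def)
  moreover have "iso_class src tgt A = iso_class src tgt (fst U ! ht A)"
    using parent_B parent_iso_class[OF U ht_B] by simp
  ultimately show "\<exists>A' B' e. iso_class src tgt A = iso_class src tgt A' \<and>
      iso_class src tgt B = iso_class src tgt B' \<and> src e = B' \<and> tgt e = A'"
    unfolding step_def by blast
next
  assume "\<exists>A' B' e. iso_class src tgt A = iso_class src tgt A' \<and>
      iso_class src tgt B = iso_class src tgt B' \<and> src e = B' \<and> tgt e = A'"
  then obtain A' B' where A': "iso_class src tgt A = iso_class src tgt A'"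
    and B': "iso_class src tgt B = iso_class src tgt B'" and A'B': "step A' B'"
    unfolding step_def by blast
  have ht_A': "ht A' = ht A" and ht_B': "ht B' = Suc (ht A)"
    using A' B' ht_B isotypic_imp_ht_eq unfolding iso_class_eq_iff by metis+
  obtain U where U: "universal_evol src tgt U B'" using universal_evol_exists by blast
  have "isotypic src tgt (fst U ! ht A) A'"
    using step_isotypic_universal_evol_nth[OF U A'B'] ht_A' ht_B' by simp
  then have "iso_class src tgt (fst U ! ht A) = iso_class src tgt A'"
    unfolding iso_class_eq_iff .
  then show "parent src tgt (iso_class src tgt B) = iso_class src tgt A"
    using B' A' parent_iso_class[OF U ht_B'] by simp
qed

end

theorem theorem7p1:
  fixes src tgt :: "'e \<Rightarrow> 'v" and a b :: "'v set" and m n :: nat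
  assumes phyl: "phylogenetic_quiver src tgt"
    and a: "a \<in> evo_level src tgt m"
    and b: "b \<in> evo_level src tgt n"
  shows "(class_le src tgt a b \<longleftrightarrow> m \<le> n \<and> class_le src tgt a ((parent src tgt ^^ (n - m)) b))
     \<and> (m = 0 \<and> n = 0 \<longrightarrow> (class_le src tgt a b \<longleftrightarrow> a = b))
     \<and> (m = n \<and> m \<ge> 1 \<and> class_le src tgt a b \<longrightarrow> parent src tgt a = parent src tgt b)
     \<and> (n = m + 1 \<longrightarrow> (parent src tgt b = a \<longleftrightarrow>
           (\<exists>A B e. a = iso_class src tgt A \<and> b = iso_class src tgt B \<and> src e = B \<and> tgt e = A)))"
proof -
  interpret phylogenetic src tgt using phyl by unfold_locales
  obtain A B where A: "a = iso_class src tgt A" "ht A = m"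
    and B: "b = iso_class src tgt B" "ht B = n"
    using a b unfolding evo_level_iff by blast
  have "class_le src tgt a b \<longleftrightarrow> m \<le> n \<and> class_le src tgt a ((parent src tgt ^^ (n - m)) b)"
    unfolding A(1) B(1) by (rule class_le_iff_parent_pow[OF A(2) B(2)])
  moreover have "m = 0 \<and> n = 0 \<longrightarrow> (class_le src tgt a b \<longleftrightarrow> a = b)"
    unfolding A(1) B(1) using B(2) ht_0_imp_primitive class_le_primitive_iff by simp
  moreover have "m = n \<and> m \<ge> 1 \<and> class_le src tgt a b \<longrightarrow> parent src tgt a = parent src tgt b"
    unfolding A(1) B(1) class_le_iso_class_iff using A(2) B(2) ancestor_imp_parent_eq by simp
  moreover have "n = m + 1 \<longrightarrow> (parent src tgt b = a \<longleftrightarrow>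
      (\<exists>A B e. a = iso_class src tgt A \<and> b = iso_class src tgt B \<and> src e = B \<and> tgt e = A))"
    unfolding A(1) B(1) using A(2) B(2) parent_iso_class_eq_iff_edge by simp
  ultimately show ?thesis by (intro conjI)
qed

end
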